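(* Let $(\Sigma_+,\Sigma_-,N_1,N_2,N_3)$ be a solution of the Wainwright–Hsu system satisfying the constraint, with $N_1<0$ and $N_2,N_3>0$. Then $N_1(N_2+N_3)$ does not converge to $0$ as $\tau\to\infty$.
   Context: Wainwright–Hsu system: for functions $N_1,N_2,N_3,\Sigma_+,\Sigma_-$ of $\tau\in\mathbb{R}$ (prime denotes $d/d\tau$), $N_1'=(q-4\Sigma_+)N_1$, $N_2'=(q+2\Sigma_++2\sqrt3\Sigma_-)N_2$, $N_3'=(q+2\Sigma_+-2\sqrt3\Sigma_-)N_3$, $\Sigma_+'=-(2-q)\Sigma_+-3S_+$, $\Sigma_-'=-(2-q)\Sigma_--3S_-$, where $q=2(\Sigma_+^2+\Sigma_-^2)$, $S_+=\frac12[(N_2-N_3)^2-N_1(2N_1-N_2-N_3)]$, $S_-=\frac{\sqrt3}{2}(N_3-N_2)(N_1-N_2-N_3)$, together with the constraint $\Sigma_+^2+\Sigma_-^2+\frac34[N_1^2+N_2^2+N_3^2-2(N_1N_2+N_2N_3+N_1N_3)]=1$. Solutions with these sign conditions exist for all $\tau\in\mathbb{R}$. *)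

theory Defs
  imports "HOL-Analysis.Analysis"
begin

definition wh_q :: "real \<Rightarrow> real \<Rightarrow> real" where
  "wh_q Sp Sm = 2 * (Sp^2 + Sm^2)"

definition wh_Sp :: "real \<Rightarrow> real \<Rightarrow> real \<Rightarrow> real" where
  "wh_Sp n1 n2 n3 = (1/2) * ((n2 - n3)^2 - n1 * (2*n1 - n2 - n3))"

definition wh_Sm :: "real \<Rightarrow> real \<Rightarrow> real \<Rightarrow> real" where
  "wh_Sm n1 n2 n3 = (sqrt 3 / 2) * (n3 - n2) * (n1 - n2 - n3)"

definition wh_solution ::
  "(real \<Rightarrow> real) \<Rightarrow> (real \<Rightarrow> real) \<Rightarrow> (real \<Rightarrow> real) \<Rightarrow> (real \<Rightarrow> real) \<Rightarrow> (real \<Rightarrow> real) \<Rightarrow> bool" where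
  "wh_solution N1 N2 N3 Sp Sm \<longleftrightarrow>
     (\<forall>t. (N1 has_real_derivative ((wh_q (Sp t) (Sm t) - 4 * Sp t) * N1 t)) (at t)
        \<and> (N2 has_real_derivative ((wh_q (Sp t) (Sm t) + 2 * Sp t + 2 * sqrt 3 * Sm t) * N2 t)) (at t)
        \<and> (N3 has_real_derivative ((wh_q (Sp t) (Sm t) + 2 * Sp t - 2 * sqrt 3 * Sm t) * N3 t)) (at t)
        \<and> (Sp has_real_derivative (- (2 - wh_q (Sp t) (Sm t)) * Sp t - 3 * wh_Sp (N1 t) (N2 t) (N3 t))) (at t)
        \<and> (Sm has_real_derivative (- (2 - wh_q (Sp t) (Sm t)) * Sm t - 3 * wh_Sm (N1 t) (N2 t) (N3 t))) (at t)
        \<and> (Sp t)^2 + (Sm t)^2 + (3/4) * ((N1 t)^2 + (N2 t)^2 + (N3 t)^2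
              - 2 * (N1 t * N2 t + N2 t * N3 t + N1 t * N3 t)) = 1)"

end

theory Submission
  imports Defs
begin

text \<open>
  Along a solution the quantity \<open>R = -N\<^sub>1N\<^sub>2N\<^sub>3\<close> satisfies \<open>R' = 3qR \<ge> 0\<close>, while
  \<open>P = N\<^sub>1\<^sup>2N\<^sub>2N\<^sub>3 = |N\<^sub>1| R \<le> Z\<^sup>2/4\<close> for \<open>Z = N\<^sub>1(N\<^sub>2 + N\<^sub>3)\<close>. If \<open>Z \<rightarrow> 0\<close>, this forces
  \<open>N\<^sub>1 \<rightarrow> 0\<close> and \<open>P \<rightarrow> 0\<close>. On the other hand, eliminating the constraint from the equation
  for \<open>\<Sigma>\<^sub>+\<close> shows that the logarithmic derivative of \<open>P e\<^sup>-\<^sup>4\<^sup>\<Sigma>\<^sup>+\<close> is at least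
  \<open>4 (1 - 9/2 N\<^sub>1\<^sup>2 + 9/2 Z)\<close>, which tends to \<open>4\<close>. Hence \<open>P e\<^sup>-\<^sup>4\<^sup>\<Sigma>\<^sup>+\<close> is eventually
  nondecreasing, and as \<open>|\<Sigma>\<^sub>+| \<le> 1\<close> this bounds \<open>P\<close> away from \<open>0\<close>: a contradiction.
\<close>

lemma DERIV_mult_logarithmic:
  assumes "(f has_real_derivative a * f x) (at x)" and "(g has_real_derivative b * g x) (at x)"
  shows "((\<lambda>x. f x * g x) has_real_derivative (a + b) * (f x * g x)) (at x)"
  using DERIV_mult[OF assms] by (simp add: algebra_simps)

lemma nondecreasing_if_logarithmic_derivative_nonneg:
  fixes f a :: "real \<Rightarrow> real"
  assumes "\<And>x. T \<le> x \<Longrightarrow> (f has_real_derivative a x * f x) (at x)"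
    and "\<And>x. T \<le> x \<Longrightarrow> 0 \<le> a x" and "\<And>x. T \<le> x \<Longrightarrow> 0 \<le> f x"
    and "T \<le> t"
  shows "f T \<le> f t"
  using \<open>T \<le> t\<close>
proof (rule DERIV_nonneg_imp_nondecreasing)
  fix x assume "T \<le> x"
  then show "\<exists>y. (f has_real_derivative y) (at x) \<and> 0 \<le> y"
    using assms(1-3) by (blast intro: mult_nonneg_nonneg)
qed

lemma sq_mult_prod_le_quarter_sq_sum:
  fixes x y z :: real
  shows "x\<^sup>2 * (y * z) \<le> (x * (y + z))\<^sup>2 / 4"
proof -
  have "(x * (y + z))\<^sup>2 - 4 * (x\<^sup>2 * (y * z)) = (x * (y - z))\<^sup>2"
    by (simp add: power2_eq_square algebra_simps)
  then show ?thesis using zero_le_power2[of "x * (y - z)"] by linarith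
qed

lemma wh_constraint_form_nonneg:
  fixes n1 n2 n3 :: real
  assumes "n1 * (n2 + n3) \<le> 0"
  shows "0 \<le> n1\<^sup>2 + n2\<^sup>2 + n3\<^sup>2 - 2 * (n1 * n2 + n2 * n3 + n1 * n3)"
proof -
  have "n1\<^sup>2 + n2\<^sup>2 + n3\<^sup>2 - 2 * (n1 * n2 + n2 * n3 + n1 * n3)
      = n1\<^sup>2 + (n2 - n3)\<^sup>2 - 2 * (n1 * (n2 + n3))"
    by (simp add: power2_eq_square algebra_simps)
  with assms show ?thesis using zero_le_power2[of n1] zero_le_power2[of "n2 - n3"] by linarith
qed

lemma wh_Sp_eq_on_constraint:
  fixes n1 n2 n3 s m :: real
  assumes "s\<^sup>2 + m\<^sup>2 + 3/4 * (n1\<^sup>2 + n2\<^sup>2 + n3\<^sup>2 - 2 * (n1 * n2 + n2 * n3 + n1 * n3)) = 1"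
  shows "- (2 - wh_q s m) * s - 3 * wh_Sp n1 n2 n3
     = - (2 - wh_q s m) * (1 + s) + 9/2 * n1\<^sup>2 - 9/2 * (n1 * (n2 + n3))"
  using assms by (simp add: wh_q_def wh_Sp_def power2_eq_square field_simps)

lemma abs_le_1_if_sum_sq_le_1:
  fixes s m :: real
  assumes "s\<^sup>2 + m\<^sup>2 \<le> 1"
  shows "\<bar>s\<bar> \<le> 1"
proof -
  have "s\<^sup>2 \<le> 1"
    using assms zero_le_power2[of m] by linarith
  then show ?thesis
    by (simp add: abs_square_le_1)
qed

lemma wh_q_minus_Sp_ge:
  fixes s m :: real
  assumes "s\<^sup>2 + m\<^sup>2 \<le> 1"
  shows "1 - (2 - wh_q s m) * (1 + s) \<le> wh_q s m - s"
proof -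
  have "wh_q s m - s - (1 - (2 - wh_q s m) * (1 + s)) = 1 + s - 2 * (s * (s\<^sup>2 + m\<^sup>2))"
    by (simp add: wh_q_def power2_eq_square algebra_simps)
  moreover have "\<bar>s\<bar> \<le> 1"
    using abs_le_1_if_sum_sq_le_1[OF assms] .
  moreover have "s * (s\<^sup>2 + m\<^sup>2) \<le> max s 0"
    using assms by (cases "0 \<le> s") (auto intro: mult_left_le mult_nonpos_nonneg)
  ultimately show ?thesis by linarith
qed

locale wh_type_VIII =
  fixes N1 N2 N3 Sp Sm :: "real \<Rightarrow> real"
  assumes solution: "wh_solution N1 N2 N3 Sp Sm"
    and N1_neg: "N1 t < 0" and N2_pos: "0 < N2 t" and N3_pos: "0 < N3 t"
begin

definition q :: "real \<Rightarrow> real" where "q t = wh_q (Sp t) (Sm t)"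
definition Z :: "real \<Rightarrow> real" where "Z t = N1 t * (N2 t + N3 t)"
definition R :: "real \<Rightarrow> real" where "R t = - N1 t * (N2 t * N3 t)"
definition P :: "real \<Rightarrow> real" where "P t = (N1 t)\<^sup>2 * (N2 t * N3 t)"
definition G :: "real \<Rightarrow> real" where "G t = P t * exp (- 4 * Sp t)"
definition Sp' :: "real \<Rightarrow> real"
  where "Sp' t = - (2 - q t) * (1 + Sp t) + 9/2 * (N1 t)\<^sup>2 - 9/2 * Z t"

lemma N1_deriv: "(N1 has_real_derivative (q t - 4 * Sp t) * N1 t) (at t)"
  and N2_deriv: "(N2 has_real_derivative (q t + 2 * Sp t + 2 * sqrt 3 * Sm t) * N2 t) (at t)"
  and N3_deriv: "(N3 has_real_derivative (q t + 2 * Sp t - 2 * sqrt 3 * Sm t) * N3 t) (at t)"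
  and constraint: "(Sp t)\<^sup>2 + (Sm t)\<^sup>2 + 3/4 * ((N1 t)\<^sup>2 + (N2 t)\<^sup>2 + (N3 t)\<^sup>2
      - 2 * (N1 t * N2 t + N2 t * N3 t + N1 t * N3 t)) = 1"
  using solution unfolding wh_solution_def q_def by simp_all

lemma Sp_deriv: "(Sp has_real_derivative Sp' t) (at t)"
  using solution wh_Sp_eq_on_constraint[OF constraint]
  unfolding wh_solution_def Sp'_def q_def Z_def by metis

lemma Sigma_sq_le_1: "(Sp t)\<^sup>2 + (Sm t)\<^sup>2 \<le> 1"
proof -
  have "N1 t * (N2 t + N3 t) \<le> 0"
    using N1_neg[of t] N2_pos[of t] N3_pos[of t] by (intro mult_nonpos_nonneg) auto
  from wh_constraint_form_nonneg[OF this] constraint[of t] show ?thesis by argo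
qed

lemma abs_Sp_le_1: "\<bar>Sp t\<bar> \<le> 1"
  using abs_le_1_if_sum_sq_le_1[OF Sigma_sq_le_1] .

lemma R_pos: "0 < R t"
  using mult_neg_pos[OF N1_neg mult_pos_pos[OF N2_pos N3_pos]] by (simp add: R_def)

lemma R_deriv: "(R has_real_derivative 3 * q t * R t) (at t)"
proof -
  have "((\<lambda>t. - N1 t * (N2 t * N3 t)) has_real_derivative
      ((q t - 4 * Sp t) + ((q t + 2 * Sp t + 2 * sqrt 3 * Sm t) + (q t + 2 * Sp t - 2 * sqrt 3 * Sm t)))
      * (- N1 t * (N2 t * N3 t))) (at t)"
    using N1_deriv N2_deriv N3_deriv
    by (intro DERIV_mult_logarithmic) (auto dest: DERIV_minus)
  then show ?thesis by (simp add: R_def[abs_def] algebra_simps)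
qed

lemma R_mono:
  assumes "0 \<le> t"
  shows "R 0 \<le> R t"
proof (rule nondecreasing_if_logarithmic_derivative_nonneg[where a = "\<lambda>x. 3 * q x", OF _ _ _ assms])
  show "(R has_real_derivative 3 * q x * R x) (at x)" for x
    by (rule R_deriv)
  show "0 \<le> 3 * q x" for x
    by (simp add: q_def wh_q_def)
  show "0 \<le> R x" for x
    using R_pos less_imp_le by blast
qed

lemma P_eq: "P t = \<bar>N1 t\<bar> * R t"
  using N1_neg[of t] by (simp add: P_def R_def power2_eq_square)

lemma P_pos: "0 < P t"
  unfolding P_eq using N1_neg[of t] R_pos[of t] by (intro mult_pos_pos) auto

lemma P_le: "P t \<le> (Z t)\<^sup>2 / 4"
  unfolding P_def Z_def by (rule sq_mult_prod_le_quarter_sq_sum)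

lemma P_deriv: "(P has_real_derivative 4 * (q t - Sp t) * P t) (at t)"
proof -
  have "((\<lambda>t. N1 t * N1 t * (N2 t * N3 t)) has_real_derivative
      ((q t - 4 * Sp t) + (q t - 4 * Sp t) + ((q t + 2 * Sp t + 2 * sqrt 3 * Sm t)
        + (q t + 2 * Sp t - 2 * sqrt 3 * Sm t))) * (N1 t * N1 t * (N2 t * N3 t))) (at t)"
    using N1_deriv N2_deriv N3_deriv by (intro DERIV_mult_logarithmic)
  then show ?thesis by (simp add: P_def[abs_def] power2_eq_square algebra_simps)
qed

lemma G_pos: "0 < G t"
  using P_pos by (simp add: G_def)

lemma G_deriv: "(G has_real_derivative 4 * (q t - Sp t - Sp' t) * G t) (at t)"
proof -
  have "((\<lambda>t. exp (- 4 * Sp t)) has_real_derivative (- 4 * Sp' t) * exp (- 4 * Sp t)) (at t)"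
    using Sp_deriv by (auto intro!: derivative_eq_intros)
  from DERIV_mult_logarithmic[OF P_deriv this] show ?thesis
    by (simp add: G_def[abs_def] algebra_simps)
qed

lemma q_minus_Sp_minus_Sp'_ge: "1 - 9/2 * (N1 t)\<^sup>2 + 9/2 * Z t \<le> q t - Sp t - Sp' t"
  using wh_q_minus_Sp_ge[OF Sigma_sq_le_1, of t] by (simp add: Sp'_def q_def algebra_simps)

context
  assumes Z_tendsto_0: "(Z \<longlongrightarrow> 0) at_top"
begin

lemma P_tendsto_0: "(P \<longlongrightarrow> 0) at_top"
proof (rule Lim_null_comparison)
  show "\<forall>\<^sub>F t in at_top. norm (P t) \<le> (Z t)\<^sup>2 / 4"
    using P_pos P_le by (simp add: less_imp_le)
  show "((\<lambda>t. (Z t)\<^sup>2 / 4) \<longlongrightarrow> 0) at_top"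
    using tendsto_divide[OF tendsto_power[OF Z_tendsto_0, of 2] tendsto_const[of 4]] by simp
qed

lemma N1_tendsto_0: "(N1 \<longlongrightarrow> 0) at_top"
proof (rule Lim_null_comparison)
  show "\<forall>\<^sub>F t in at_top. norm (N1 t) \<le> P t / R 0"
    using eventually_ge_at_top[of 0]
  proof eventually_elim
    case (elim t)
    then have "\<bar>N1 t\<bar> * R 0 \<le> P t"
      using R_mono by (simp add: P_eq mult_left_mono)
    then show ?case using R_pos[of 0] by (simp add: field_simps)
  qed
  show "((\<lambda>t. P t / R 0) \<longlongrightarrow> 0) at_top"
    using tendsto_divide[OF P_tendsto_0 tendsto_const[of "R 0"]] R_pos[of 0] by simp
qed

lemma eventually_P_ge: "\<exists>c>0. \<forall>\<^sub>F t in at_top. c \<le> P t"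
proof -
  have "((\<lambda>t. 1 - 9/2 * (N1 t)\<^sup>2 + 9/2 * Z t) \<longlongrightarrow> 1 - 9/2 * 0\<^sup>2 + 9/2 * 0) at_top"
    by (intro tendsto_intros N1_tendsto_0 Z_tendsto_0)
  then have "\<forall>\<^sub>F t in at_top. 0 < 1 - 9/2 * (N1 t)\<^sup>2 + 9/2 * Z t"
    by (rule order_tendstoD) simp
  then obtain T where T: "\<And>t. T \<le> t \<Longrightarrow> 0 < 1 - 9/2 * (N1 t)\<^sup>2 + 9/2 * Z t"
    by (auto simp: eventually_at_top_linorder)
  have G_mono: "G T \<le> G t" if "T \<le> t" for t
  proof (rule nondecreasing_if_logarithmic_derivative_nonneg[OF _ _ _ that])
    show "(G has_real_derivative 4 * (q x - Sp x - Sp' x) * G x) (at x)" for x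
      by (rule G_deriv)
    show "0 \<le> 4 * (q x - Sp x - Sp' x)" if "T \<le> x" for x
      using T[OF that] q_minus_Sp_minus_Sp'_ge[of x] by argo
    show "0 \<le> G x" for x
      using G_pos less_imp_le by blast
  qed
  have "G T * exp (- 4) \<le> P t" if "T \<le> t" for t
  proof -
    have "G T * exp (- 4) \<le> G t * exp (4 * Sp t)"
      using G_mono[OF that] abs_Sp_le_1[of t] G_pos[of T] by (intro mult_mono) auto
    also have "\<dots> = P t"
      by (simp add: G_def mult.assoc flip: exp_add)
    finally show ?thesis .
  qed
  moreover have "0 < G T * exp (- 4)"
    using G_pos[of T] by simp
  ultimately show ?thesis
    by (auto simp: eventually_at_top_linorder)
qed

end

lemma Z_not_tendsto_0: "\<not> (Z \<longlongrightarrow> 0) at_top"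
proof
  assume Z_lim: "(Z \<longlongrightarrow> 0) at_top"
  then obtain c where "0 < c" and P_ge: "\<forall>\<^sub>F t in at_top. c \<le> P t"
    using eventually_P_ge by blast
  have "\<forall>\<^sub>F t in at_top. P t < c"
    using order_tendstoD(2)[OF P_tendsto_0[OF Z_lim] \<open>0 < c\<close>] .
  from eventually_conj[OF P_ge this] show False
    by (auto simp: eventually_at_top_linorder)
qed

end

theorem mainTheorem15:
  fixes N1 N2 N3 Sp Sm :: "real \<Rightarrow> real"
  assumes "wh_solution N1 N2 N3 Sp Sm"
    and "\<forall>t. N1 t < 0" and "\<forall>t. N2 t > 0" and "\<forall>t. N3 t > 0"
  shows "\<not> ((\<lambda>t. N1 t * (N2 t + N3 t)) \<longlongrightarrow> 0) at_top"
proof -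
  interpret wh_type_VIII N1 N2 N3 Sp Sm
    using assms by unfold_locales auto
  show ?thesis
    using Z_not_tendsto_0 by (simp add: Z_def[abs_def])
qed

end
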